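(* Let $p$ be a prime, $k\ge 1$ and $n\ge 0$ integers, $\alpha_0,\dots,\alpha_{n-1}\in\mathbb{Z}_p$ and $r_0,\dots,r_{n-1}$ nonnegative integers, with $|r|=r_0+\cdots+r_{n-1}$. Define $$\check{D}_{n;\bar{\alpha},\bar{r}}^{(k)}=\int_{\mathbb{Z}_p}\cdots\int_{\mathbb{Z}_p}\prod_{i=0}^{n-1}(x_1x_2\cdots x_k-\alpha_i)^{r_i}\,d\mu_0(x_1)\cdots d\mu_0(x_k).$$ Then $$\check{D}_{n;\bar{\alpha},\bar{r}}^{(k)}=\sum_{m=0}^{|r|}s_{\bar{\alpha}}(n,m;\bar{r})\sum_{\ell_1=0}^{m}\cdots\sum_{\ell_k=0}^{m}\prod_{i=1}^{k}\frac{(-1)^{\ell_i}\,\ell_i!\,S(m,\ell_i)}{\ell_i+1}.$$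
   Context: For a polynomial (more generally uniformly differentiable) function $f:\mathbb{Z}_p\to\mathbb{C}_p$, the Volkenborn ($p$-adic invariant) integral is $\int_{\mathbb{Z}_p}f(x)\,d\mu_0(x)=\lim_{N\to\infty}p^{-N}\sum_{x=0}^{p^N-1}f(x)$; multiple integrals are iterated integrals in each variable. $S(m,\ell)$ are the Stirling numbers of the second kind, $x^m=\sum_{\ell=0}^m S(m,\ell)x(x-1)\cdots(x-\ell+1)$. The generalized Comtet numbers of the first kind $s_{\bar\alpha}(n,m;\bar r)$ are defined by $\prod_{i=0}^{n-1}(x-\alpha_i)^{r_i}=\sum_{m=0}^{|r|}s_{\bar\alpha}(n,m;\bar r)x^m$, where $\bar\alpha=(\alpha_0,\dots,\alpha_{n-1})$, $\bar r=(r_0,\dots,r_{n-1})$. *)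

theory Defs
  imports "HOL-Computational_Algebra.Polynomial" "HOL-Combinatorics.Stirling"
    "HOL-Library.FuncSet" "HOL-Library.Cardinality" "HOL-Number_Theory.Cong"
begin

section \<open>The field Q_p of p-adic numbers, with p = CARD('p)\<close>

class prime_card = finite +
  assumes prime_card: "prime (CARD('a))"

text \<open>A p-adic integer is represented by a compatible sequence of integers
  f N, where f N is a representative of the residue mod p^N.\<close>

definition compat :: "nat \<Rightarrow> (nat \<Rightarrow> int) \<Rightarrow> bool" where
  "compat p f \<longleftrightarrow> (\<forall>N. [f (Suc N) = f N] (mod (int p ^ N)))"

text \<open>A p-adic number is represented by a pair (e, f) standing for f / p^e.\<close>

type_synonym 'p qp_raw = "'p itself \<times> nat \<times> (nat \<Rightarrow> int)"

definition qrel :: "'p qp_raw \<Rightarrow> 'p qp_raw \<Rightarrow> bool" where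
  "qrel a b \<longleftrightarrow> compat CARD('p) (snd (snd a)) \<and> compat CARD('p) (snd (snd b)) \<and>
     (\<forall>N. [int CARD('p) ^ fst (snd b) * snd (snd a) N = int CARD('p) ^ fst (snd a) * snd (snd b) N] (mod (int CARD('p) ^ N)))"

lemma compat_shift:
  assumes "compat p f" shows "[f (N + k) = f N] (mod (int p ^ N))"
proof (induction k)
  case 0 then show ?case by simp
next
  case (Suc k)
  have "[f (Suc (N + k)) = f (N + k)] (mod (int p ^ (N + k)))"
    using assms unfolding compat_def by blast
  then have "[f (Suc (N + k)) = f (N + k)] (mod (int p ^ N))"
    by (rule cong_dvd_modulus) (simp add: le_imp_power_dvd)
  then show ?case using Suc by (simp add: cong_trans)
qed

lemma compat_cancel:
  assumes p: "p > 0" and c: "compat p d"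
    and h: "\<And>N. [int p ^ e * d N = 0] (mod (int p ^ N))"
  shows "[d N = 0] (mod (int p ^ N))"
proof -
  have "[int p ^ e * d (N + e) = 0] (mod (int p ^ (N + e)))" using h by blast
  then have "int p ^ N * int p ^ e dvd int p ^ e * d (N + e)"
    by (simp add: cong_0_iff power_add)
  then have "int p ^ N dvd d (N + e)"
    using p by (simp add: mult.commute)
  then have "[d (N + e) = 0] (mod (int p ^ N))" by (simp add: cong_0_iff)
  moreover have "[d (N + e) = d N] (mod (int p ^ N))" using compat_shift[OF c] .
  ultimately show ?thesis by (meson cong_sym cong_trans)
qed

lemma compat_add: "compat p f \<Longrightarrow> compat p g \<Longrightarrow> compat p (\<lambda>N. f N + g N)"
  unfolding compat_def by (simp add: cong_add)
lemma compat_mult: "compat p f \<Longrightarrow> compat p g \<Longrightarrow> compat p (\<lambda>N. f N * g N)"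
  unfolding compat_def by (simp add: cong_mult)
lemma compat_const: "compat p (\<lambda>N. c)"
  unfolding compat_def by simp
lemma compat_scale: "compat p f \<Longrightarrow> compat p (\<lambda>N. c * f N)"
  using compat_mult[OF compat_const] by blast
lemma compat_neg: "compat p f \<Longrightarrow> compat p (\<lambda>N. - f N)"
  unfolding compat_def by (simp add: cong_minus_minus_iff)

lemma qrel_part_equivp: "part_equivp (qrel :: 'p::prime_card qp_raw \<Rightarrow> _)"
proof (rule part_equivpI)
  show "\<exists>x. (qrel :: 'p qp_raw \<Rightarrow> _) x x"
    by (rule exI[of _ "(TYPE('p), 0, \<lambda>_. 0)"]) (simp add: qrel_def compat_const)
  show "symp ((qrel :: 'p qp_raw \<Rightarrow> _))"
    unfolding symp_def qrel_def by (auto simp: cong_sym)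
  show "transp ((qrel :: 'p qp_raw \<Rightarrow> _))"
  proof (rule transpI)
    fix a b c assume ab: "(qrel :: 'p qp_raw \<Rightarrow> _) a b" and bc: "(qrel :: 'p qp_raw \<Rightarrow> _) b c"
    obtain t1 e1 f1 where a: "a = (t1, e1, f1)" by (cases a) auto
    obtain t2 e2 f2 where b: "b = (t2, e2, f2)" by (cases b) auto
    obtain t3 e3 f3 where c: "c = (t3, e3, f3)" by (cases c) auto
    define p where "p = int CARD('p)"
    have pp: "CARD('p) > 0" using prime_card[where 'a='p] prime_gt_0_nat by blast
    have c1: "compat CARD('p) f1" and c3: "compat CARD('p) f3"
      using ab bc a c by (auto simp: qrel_def)
    have h1: "[p ^ e2 * f1 N = p ^ e1 * f2 N] (mod p ^ N)" for N
      using ab a b by (auto simp: qrel_def p_def)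
    have h2: "[p ^ e3 * f2 N = p ^ e2 * f3 N] (mod p ^ N)" for N
      using bc b c by (auto simp: qrel_def p_def)
    define d where "d = (\<lambda>N. p ^ e3 * f1 N - p ^ e1 * f3 N)"
    have cd: "compat CARD('p) d" unfolding d_def
      using compat_add[OF compat_scale[OF c1] compat_neg[OF compat_scale[OF c3]]]
      by (simp add: p_def)
    have "[p ^ e2 * d N = 0] (mod p ^ N)" for N
    proof -
      have "[p ^ e3 * (p ^ e2 * f1 N) = p ^ e3 * (p ^ e1 * f2 N)] (mod p ^ N)"
        using h1 by (rule cong_scalar_left)
      moreover have "[p ^ e1 * (p ^ e3 * f2 N) = p ^ e1 * (p ^ e2 * f3 N)] (mod p ^ N)"
        using h2 by (rule cong_scalar_left)
      ultimately have "[p ^ e3 * (p ^ e2 * f1 N) = p ^ e1 * (p ^ e2 * f3 N)] (mod p ^ N)"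
        by (metis (no_types, lifting) cong_trans mult.left_commute)
      then have "[p ^ e3 * (p ^ e2 * f1 N) - p ^ e1 * (p ^ e2 * f3 N) = 0] (mod p ^ N)"
        by (simp add: cong_diff_iff_cong_0)
      then show ?thesis by (simp add: d_def algebra_simps)
    qed
    then have "[d N = 0] (mod p ^ N)" for N
      using compat_cancel[OF pp cd, of e2] by (simp add: p_def)
    then have "[p ^ e3 * f1 N = p ^ e1 * f3 N] (mod p ^ N)" for N
      by (simp add: d_def cong_diff_iff_cong_0)
    then show "(qrel :: 'p qp_raw \<Rightarrow> _) a c" using a c c1 c3 by (simp add: qrel_def p_def)
  qed
qed

quotient_type (overloaded) 'p qp = "'p::prime_card qp_raw" / partial: qrel
  by (rule qrel_part_equivp)

definition plus_raw :: "'p qp_raw \<Rightarrow> 'p qp_raw \<Rightarrow> 'p qp_raw" where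
  "plus_raw a b = (case a of (t, e, f) \<Rightarrow> case b of (_, d, g) \<Rightarrow>
     (t, e + d, \<lambda>N. int CARD('p) ^ d * f N + int CARD('p) ^ e * g N))"
definition minus_raw :: "'p qp_raw \<Rightarrow> 'p qp_raw \<Rightarrow> 'p qp_raw" where
  "minus_raw a b = (case a of (t, e, f) \<Rightarrow> case b of (_, d, g) \<Rightarrow>
     (t, e + d, \<lambda>N. int CARD('p) ^ d * f N - int CARD('p) ^ e * g N))"
definition times_raw :: "'p qp_raw \<Rightarrow> 'p qp_raw \<Rightarrow> 'p qp_raw" where
  "times_raw a b = (case a of (t, e, f) \<Rightarrow> case b of (_, d, g) \<Rightarrow>
     (t, e + d, \<lambda>N. f N * g N))"
definition uminus_raw :: "'p qp_raw \<Rightarrow> 'p qp_raw" where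
  "uminus_raw a = (case a of (t, e, f) \<Rightarrow> (t, e, \<lambda>N. - f N))"

lemma qrel_iff: "qrel (t, e, f) (t', e', g) \<longleftrightarrow> compat CARD('p) f \<and> compat CARD('p) g \<and>
   (\<forall>N. [int CARD('p) ^ e' * f N = int CARD('p) ^ e * g N] (mod (int CARD('p) ^ N)))"
  for t t' :: "'p itself"
  by (simp add: qrel_def qrel_def)

lemma compat_pp: "compat CARD('p) f \<longleftrightarrow> (\<forall>N. [f (Suc N) = f N] (mod (int CARD('p) ^ N)))"
  by (simp add: compat_def qrel_def)

lemma plus_raw_rsp:
  fixes x y x' y' :: "'p qp_raw"
  assumes "qrel x y" "qrel x' y'"
  shows "qrel (plus_raw x x') (plus_raw y y')"
proof -
  obtain t1 e1 f1 where x: "x = (t1, e1, f1)" by (cases x) auto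
  obtain t2 e2 f2 where y: "y = (t2, e2, f2)" by (cases y) auto
  obtain s1 d1 g1 where x': "x' = (s1, d1, g1)" by (cases x') auto
  obtain s2 d2 g2 where y': "y' = (s2, d2, g2)" by (cases y') auto
  define p where "p = int CARD('p)"
  have A: "compat CARD('p) f1" "compat CARD('p) f2" "compat CARD('p) g1" "compat CARD('p) g2"
    and h1: "\<And>N. [p ^ e2 * f1 N = p ^ e1 * f2 N] (mod p ^ N)"
    and h2: "\<And>N. [p ^ d2 * g1 N = p ^ d1 * g2 N] (mod p ^ N)"
    using assms x y x' y' by (auto simp: qrel_iff p_def)
  have "[p ^ (e2 + d2) * (p ^ d1 * f1 N + p ^ e1 * g1 N) =
         p ^ (e1 + d1) * (p ^ d2 * f2 N + p ^ e2 * g2 N)] (mod p ^ N)" for N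
  proof -
    have "[p ^ (d1 + d2) * (p ^ e2 * f1 N) + p ^ (e1 + e2) * (p ^ d2 * g1 N) =
           p ^ (d1 + d2) * (p ^ e1 * f2 N) + p ^ (e1 + e2) * (p ^ d1 * g2 N)] (mod p ^ N)"
      by (intro cong_add cong_scalar_left h1 h2)
    then show ?thesis by (simp add: algebra_simps power_add)
  qed
  moreover have "compat CARD('p) (\<lambda>N. p ^ d1 * f1 N + p ^ e1 * g1 N)"
    "compat CARD('p) (\<lambda>N. p ^ d2 * f2 N + p ^ e2 * g2 N)"
    using A by (auto intro!: compat_add compat_scale)
  ultimately show ?thesis using x y x' y'
    by (simp add: plus_raw_def qrel_iff p_def)
qed

lemma uminus_raw_rsp:
  fixes x y :: "'p qp_raw"
  assumes "qrel x y" shows "qrel (uminus_raw x) (uminus_raw y)"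
proof -
  obtain t1 e1 f1 where x: "x = (t1, e1, f1)" by (cases x) auto
  obtain t2 e2 f2 where y: "y = (t2, e2, f2)" by (cases y) auto
  show ?thesis using assms x y
    by (auto simp: qrel_iff uminus_raw_def compat_neg cong_minus_minus_iff)
qed

lemma times_raw_rsp:
  fixes x y x' y' :: "'p qp_raw"
  assumes "qrel x y" "qrel x' y'"
  shows "qrel (times_raw x x') (times_raw y y')"
proof -
  obtain t1 e1 f1 where x: "x = (t1, e1, f1)" by (cases x) auto
  obtain t2 e2 f2 where y: "y = (t2, e2, f2)" by (cases y) auto
  obtain s1 d1 g1 where x': "x' = (s1, d1, g1)" by (cases x') auto
  obtain s2 d2 g2 where y': "y' = (s2, d2, g2)" by (cases y') auto
  define p where "p = int CARD('p)"
  have A: "compat CARD('p) f1" "compat CARD('p) f2" "compat CARD('p) g1" "compat CARD('p) g2"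
    and h1: "\<And>N. [p ^ e2 * f1 N = p ^ e1 * f2 N] (mod p ^ N)"
    and h2: "\<And>N. [p ^ d2 * g1 N = p ^ d1 * g2 N] (mod p ^ N)"
    using assms x y x' y' by (auto simp: qrel_iff p_def)
  have "[p ^ (e2 + d2) * (f1 N * g1 N) = p ^ (e1 + d1) * (f2 N * g2 N)] (mod p ^ N)" for N
  proof -
    have "[(p ^ e2 * f1 N) * (p ^ d2 * g1 N) = (p ^ e1 * f2 N) * (p ^ d1 * g2 N)] (mod p ^ N)"
      by (intro cong_mult h1 h2)
    then show ?thesis by (simp add: algebra_simps power_add)
  qed
  moreover have "compat CARD('p) (\<lambda>N. f1 N * g1 N)" "compat CARD('p) (\<lambda>N. f2 N * g2 N)"
    using A by (auto intro!: compat_mult)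
  ultimately show ?thesis using x y x' y'
    by (simp add: times_raw_def qrel_iff p_def)
qed

lemma minus_raw_eq: "minus_raw x y = plus_raw x (uminus_raw y)"
  by (cases x; cases y) (simp add: minus_raw_def plus_raw_def uminus_raw_def)

lemma minus_raw_rsp:
  assumes "qrel x y" "qrel x' y'"
  shows "qrel (minus_raw x x') (minus_raw y y')"
  unfolding minus_raw_eq using assms by (intro plus_raw_rsp uminus_raw_rsp)


lemma qrel_by:
  fixes t t' :: "'p itself"
  assumes "compat CARD('p) f" "compat CARD('p) g"
    "\<And>N. int CARD('p) ^ e' * f N = int CARD('p) ^ e * g N"
  shows "qrel (t, e, f) (t', e', g)"
  using assms by (simp add: qrel_iff)

lemma qrel_compat: "qrel (t, e, f) (t', e', g) \<Longrightarrow> compat CARD('p) f"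
  for t t' :: "'p itself" by (simp add: qrel_iff)

lemma compat_diff: "compat p f \<Longrightarrow> compat p g \<Longrightarrow> compat p (\<lambda>N. f N - g N)"
  unfolding compat_def by (simp add: cong_diff)

lemmas compat_intros = compat_diff compat_add compat_mult compat_const compat_scale compat_neg

instantiation qp :: (prime_card) comm_ring_1
begin

lift_definition zero_qp :: "'a qp" is "(TYPE('a), 0, \<lambda>_. 0)"
  by (simp add: qrel_iff compat_const)
lift_definition one_qp :: "'a qp" is "(TYPE('a), 0, \<lambda>_. 1)"
  by (simp add: qrel_iff compat_const)
lift_definition plus_qp :: "'a qp \<Rightarrow> 'a qp \<Rightarrow> 'a qp" is plus_raw
  by (rule plus_raw_rsp)
lift_definition minus_qp :: "'a qp \<Rightarrow> 'a qp \<Rightarrow> 'a qp" is minus_raw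
  by (rule minus_raw_rsp)
lift_definition times_qp :: "'a qp \<Rightarrow> 'a qp \<Rightarrow> 'a qp" is times_raw
  by (rule times_raw_rsp)
lift_definition uminus_qp :: "'a qp \<Rightarrow> 'a qp" is uminus_raw
  by (rule uminus_raw_rsp)

instance
proof
  fix a b c :: "'a qp"
  show "a * b * c = a * (b * c)"
    by transfer (auto simp: times_raw_def ac_simps intro!: qrel_by compat_intros dest!: qrel_compat)
  show "a * b = b * a"
    by transfer (auto simp: times_raw_def ac_simps intro!: qrel_by compat_intros dest!: qrel_compat)
  show "1 * a = a"
    by transfer (auto simp: times_raw_def intro!: qrel_by compat_intros dest!: qrel_compat)
  show "a + b + c = a + (b + c)"
    by transfer (auto simp: plus_raw_def algebra_simps power_add intro!: qrel_by compat_intros dest!: qrel_compat)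
  show "a + b = b + a"
    by transfer (auto simp: plus_raw_def algebra_simps intro!: qrel_by compat_intros dest!: qrel_compat)
  show "0 + a = a"
    by transfer (auto simp: plus_raw_def intro!: qrel_by compat_intros dest!: qrel_compat)
  show "- a + a = 0"
    by transfer (auto simp: plus_raw_def uminus_raw_def intro!: qrel_by compat_intros dest!: qrel_compat)
  show "a - b = a + - b"
    by transfer (auto simp: plus_raw_def minus_raw_def uminus_raw_def intro!: qrel_by compat_intros dest!: qrel_compat)
  show "(a + b) * c = a * c + b * c"
    by transfer (auto simp: plus_raw_def times_raw_def algebra_simps power_add intro!: qrel_by compat_intros dest!: qrel_compat)
  show "(0::'a qp) \<noteq> 1"
  proof transfer
    have "CARD('a) > 1" using prime_card[where 'a='a] prime_gt_1_nat by blast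
    then show "\<not> qrel (TYPE('a), 0, \<lambda>_. 0::int) (TYPE('a), 0, \<lambda>_. 1)"
      by (auto simp: qrel_iff cong_def intro!: exI[of _ 1])
  qed
qed

end


lift_definition zp_of_seq :: "(nat \<Rightarrow> int) \<Rightarrow> 'p::prime_card qp" is
  "\<lambda>f. (TYPE('p), 0::nat, if compat CARD('p) f then f else (\<lambda>_. 0))"
  by (simp add: qrel_iff compat_const)

definition Zp :: "'p::prime_card qp set" where
  "Zp = {zp_of_seq f | f. compat CARD('p) f}"

definition padic_lim :: "(nat \<Rightarrow> 'p::prime_card qp) \<Rightarrow> 'p qp \<Rightarrow> bool" where
  "padic_lim a L \<longleftrightarrow>
     (\<forall>M. \<exists>N0. \<forall>N\<ge>N0. \<exists>z\<in>Zp. a N - L = of_nat (CARD('p) ^ M) * z)"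

definition qp_div :: "'p::prime_card qp \<Rightarrow> 'p qp \<Rightarrow> 'p qp" where
  "qp_div x y = (THE z. y * z = x)"

text \<open>The Volkenborn integral of f only depends on the values of f at the
  nonnegative integers 0, 1, 2, ...; we take f as a function on those.\<close>
definition volkenborn :: "(nat \<Rightarrow> 'p::prime_card qp) \<Rightarrow> 'p qp" where
  "volkenborn f = (THE L. padic_lim
     (\<lambda>N. qp_div (\<Sum>x<CARD('p) ^ N. f x) (of_nat (CARD('p) ^ N))) L)"

text \<open>Iterated integral over x_1, ..., x_k (x_1 innermost); the argument list is
  [x_1, ..., x_k].\<close>
fun mvolkenborn :: "nat \<Rightarrow> (nat list \<Rightarrow> 'p::prime_card qp) \<Rightarrow> 'p qp" where
  "mvolkenborn 0 F = F []"
| "mvolkenborn (Suc k) F = volkenborn (\<lambda>x. mvolkenborn k (\<lambda>xs. F (xs @ [x])))"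

definition comtet1 :: "(nat \<Rightarrow> 'a::comm_ring_1) \<Rightarrow> nat \<Rightarrow> (nat \<Rightarrow> nat) \<Rightarrow> nat \<Rightarrow> 'a" where
  "comtet1 \<alpha> n r m = coeff (\<Prod>i<n. [:- \<alpha> i, 1:] ^ r i) m"

end

theory Submission
  imports Defs
begin

text \<open>Expanding the integrand by the definition of the Comtet numbers reduces the
  iterated integral to the integrals of the powers \<open>(x\<^sub>1 \<cdots> x\<^sub>k)\<^sup>m\<close>, which factor as the
  \<open>k\<close>-th power of \<open>B\<^sub>m = \<integral> x\<^sup>m d\<mu>\<^sub>0\<close>. Writing \<open>x\<^sup>m = \<Sum> S(m,l) (x)\<^sub>l\<close> in falling factorials,
  it remains to see \<open>\<integral> (x)\<^sub>l d\<mu>\<^sub>0 = (-1)\<^sup>l l! / (l+1)\<close>: the Riemann sum over \<open>0 \<le> x < n\<close> is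
  \<open>(n)\<^sub>l\<^sub>+\<^sub>1 / (n (l+1)) = (n-1)\<cdots>(n-l) / (l+1)\<close>, and \<open>(n-1)\<cdots>(n-l) \<equiv> (-1)\<^sup>l l! mod n\<close>, so for
  \<open>n = p\<^sup>N\<close> it differs from the limit by \<open>p\<^sup>N\<close> times a bounded \<open>p\<close>-adic number.\<close>

lift_definition qp_frac :: "nat \<Rightarrow> (nat \<Rightarrow> int) \<Rightarrow> 'p::prime_card qp" is
  "\<lambda>e f. (TYPE('p), e, if compat CARD('p) f then f else (\<lambda>_. 0))"
  by (simp add: qrel_iff compat_const)

lemma qp_frac_eq_iff:
  assumes "compat CARD('p::prime_card) f" "compat CARD('p) g"
  shows "(qp_frac e f :: 'p qp) = qp_frac d g \<longleftrightarrow>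
     (\<forall>N. [int CARD('p) ^ d * f N = int CARD('p) ^ e * g N] (mod (int CARD('p) ^ N)))"
  using assms by transfer (simp add: qrel_iff)

lemma qp_frac_cases:
  fixes x :: "'p::prime_card qp"
  obtains e f where "compat CARD('p) f" "x = qp_frac e f"
proof -
  have "\<exists>e f. compat CARD('p) f \<and> x = qp_frac e f"
  proof transfer
    fix x :: "'p qp_raw"
    assume "qrel x x"
    then show "\<exists>e f. compat CARD('p) f \<and>
      qrel x (TYPE('p), e, if compat CARD('p) f then f else (\<lambda>_. 0))"
    proof (cases x)
      case (fields t e f)
      then show ?thesis using \<open>qrel x x\<close>
        by (intro exI[of _ e] exI[of _ f]) (auto simp: qrel_iff)
    qed
  qed
  then show thesis using that by blast
qed

lemma qp_frac_add:
  assumes "compat CARD('p::prime_card) f" "compat CARD('p) g"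
  shows "(qp_frac e f :: 'p qp) + qp_frac d g =
    qp_frac (e + d) (\<lambda>N. int CARD('p) ^ d * f N + int CARD('p) ^ e * g N)"
  using assms by transfer (auto simp: plus_raw_def qrel_iff intro!: compat_intros)

lemma qp_frac_mult:
  assumes "compat CARD('p::prime_card) f" "compat CARD('p) g"
  shows "(qp_frac e f :: 'p qp) * qp_frac d g = qp_frac (e + d) (\<lambda>N. f N * g N)"
  using assms by transfer (auto simp: times_raw_def qrel_iff intro!: compat_intros)

lemma qp_frac_uminus:
  assumes "compat CARD('p::prime_card) f"
  shows "- (qp_frac e f :: 'p qp) = qp_frac e (\<lambda>N. - f N)"
  using assms by transfer (auto simp: uminus_raw_def qrel_iff intro!: compat_intros)

lemma zero_qp_frac: "(0 :: 'p::prime_card qp) = qp_frac 0 (\<lambda>_. 0)"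
  by transfer (auto simp: qrel_iff compat_const)

lemma one_qp_frac: "(1 :: 'p::prime_card qp) = qp_frac 0 (\<lambda>_. 1)"
  by transfer (auto simp: qrel_iff compat_const)

lemma of_nat_qp_frac: "(of_nat n :: 'p::prime_card qp) = qp_frac 0 (\<lambda>_. int n)"
proof (induction n)
  case 0
  then show ?case by (simp add: zero_qp_frac)
next
  case (Suc n)
  have "(of_nat (Suc n) :: 'p qp) = qp_frac 0 (\<lambda>_. 1) + qp_frac 0 (\<lambda>_. int n)"
    using Suc by (simp add: one_qp_frac)
  also have "\<dots> = qp_frac 0 (\<lambda>_. int (Suc n))"
    by (subst qp_frac_add) (auto simp: compat_const)
  finally show ?case .
qed

lemma of_int_qp_frac: "(of_int c :: 'p::prime_card qp) = qp_frac 0 (\<lambda>_. c)"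
proof (cases "c \<ge> 0")
  case True
  then obtain n where "c = int n" by (metis nonneg_eq_int)
  then show ?thesis by (simp add: of_nat_qp_frac)
next
  case False
  then obtain n where "c = - int n" by (intro that[of "nat (- c)"]) simp
  then show ?thesis by (simp add: of_nat_qp_frac qp_frac_uminus compat_const)
qed

lemma Zp_iff: "x \<in> Zp \<longleftrightarrow> (\<exists>f. compat CARD('p) f \<and> x = (qp_frac 0 f :: 'p::prime_card qp))"
proof -
  have "zp_of_seq f = (qp_frac 0 f :: 'p qp)" if "compat CARD('p) f" for f
    using that by transfer (auto simp: qrel_iff)
  then show ?thesis
    unfolding Zp_def by (auto intro: sym)
qed

lemma Zp_add: "x \<in> Zp \<Longrightarrow> y \<in> Zp \<Longrightarrow> x + y \<in> Zp"
  unfolding Zp_iff by (auto simp: qp_frac_add intro!: compat_intros)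

lemma Zp_mult: "x \<in> Zp \<Longrightarrow> y \<in> Zp \<Longrightarrow> x * y \<in> Zp"
  unfolding Zp_iff by (auto simp: qp_frac_mult intro!: compat_intros)

lemma Zp_uminus: "x \<in> Zp \<Longrightarrow> - x \<in> Zp"
  unfolding Zp_iff by (auto simp: qp_frac_uminus intro!: compat_intros)

lemma Zp_of_int: "(of_int c :: 'p::prime_card qp) \<in> Zp"
  unfolding Zp_iff of_int_qp_frac by (auto intro!: compat_intros)

lemma Zp_of_nat: "(of_nat n :: 'p::prime_card qp) \<in> Zp"
  using Zp_of_int[of "int n"] by simp

lemma Zp_scaled: obtains e where "of_nat (CARD('p) ^ e) * x \<in> (Zp :: 'p::prime_card qp set)"
proof -
  obtain e f where f: "compat CARD('p) f" "x = (qp_frac e f :: 'p qp)"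
    using qp_frac_cases by blast
  have "of_nat (CARD('p) ^ e) * x = qp_frac e (\<lambda>N. int CARD('p) ^ e * f N)"
    using f by (simp add: of_nat_qp_frac qp_frac_mult compat_const)
  also have "\<dots> = qp_frac 0 f"
    using f by (subst qp_frac_eq_iff) (auto intro!: compat_intros)
  finally show thesis using that f by (auto simp: Zp_iff)
qed

lemma compat_inverse_mod_ppow:
  assumes "coprime (int u) (int p)"
  obtains g where "compat p g" "\<And>N. [int u * g N = 1] (mod (int p ^ N))"
proof -
  have cop: "coprime (int u) (int p ^ N)" for N
    using assms by simp
  define g where "g N = (SOME v. [int u * v = 1] (mod (int p ^ N)))" for N
  have g: "[int u * g N = 1] (mod (int p ^ N))" for N
    unfolding g_def by (rule someI_ex) (rule cong_solve_coprime_int[OF cop])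
  have "compat p g"
    unfolding compat_def
  proof
    fix N
    have "[int u * g (Suc N) = 1] (mod (int p ^ N))"
      using g[of "Suc N"] by (rule cong_dvd_modulus) (simp add: le_imp_power_dvd)
    then have "[int u * g (Suc N) = int u * g N] (mod (int p ^ N))"
      using g[of N] by (meson cong_sym cong_trans)
    then show "[g (Suc N) = g N] (mod (int p ^ N))"
      using cong_mult_lcancel[OF cop] by blast
  qed
  then show thesis using g by (rule that)
qed

text \<open>Write \<open>m = p\<^sup>a u\<close> with \<open>p \<nmid> u\<close>; then \<open>1/m\<close> is represented by \<open>(a, g)\<close>
  with \<open>g N \<equiv> u\<^sup>-\<^sup>1 mod p\<^sup>N\<close>.\<close>
lemma of_nat_invertible:
  assumes "m > 0"
  obtains z :: "'p::prime_card qp" where "of_nat m * z = 1"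
proof -
  define p where "p = CARD('p)"
  define a where "a = multiplicity p m"
  have p: "prime p"
    unfolding p_def by (rule prime_card)
  obtain u where u: "m = p ^ a * u" "\<not> p dvd u"
    using multiplicity_decompose'[of m p] assms p unfolding a_def by (metis neq0_conv not_prime_unit)
  have "coprime (int u) (int p)"
    using p u(2) by (simp add: prime_imp_coprime coprime_commute)
  then obtain g where g: "compat p g" "\<And>N. [int u * g N = 1] (mod (int p ^ N))"
    using compat_inverse_mod_ppow by metis
  have "of_nat m * (qp_frac a g :: 'p qp) = qp_frac a (\<lambda>N. int m * g N)"
    using g by (simp add: of_nat_qp_frac qp_frac_mult compat_const p_def)
  also have "\<dots> = qp_frac 0 (\<lambda>_. 1)"
  proof (subst qp_frac_eq_iff)
    show "\<forall>N. [int CARD('p) ^ 0 * (int m * g N) = int CARD('p) ^ a * 1] (mod (int CARD('p) ^ N))"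
      using cong_scalar_left[OF g(2), of "int p ^ a"] u(1) by (simp add: ac_simps p_def)
  qed (use g in \<open>auto intro!: compat_intros simp: p_def\<close>)
  finally show thesis
    using that one_qp_frac by metis
qed

lemma qp_div_eq_mult_inverse:
  assumes "of_nat m * w = (1 :: 'p::prime_card qp)"
  shows "qp_div x (of_nat m) = x * w"
  unfolding qp_div_def
proof (rule the_equality)
  show "of_nat m * (x * w) = x"
    using assms by (metis mult.left_commute mult.right_neutral)
next
  fix z
  assume "of_nat m * z = x"
  then show "z = x * w"
    using assms by (metis mult.commute mult.left_commute mult.right_neutral)
qed

definition nat_inverse :: "nat \<Rightarrow> 'p::prime_card qp" where
  "nat_inverse m = qp_div 1 (of_nat m)"

lemma of_nat_mult_nat_inverse: "m > 0 \<Longrightarrow> of_nat m * nat_inverse m = 1"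
  unfolding nat_inverse_def by (metis of_nat_invertible qp_div_eq_mult_inverse mult_1_left)

lemma qp_div_of_nat: "m > 0 \<Longrightarrow> qp_div x (of_nat m) = x * nat_inverse m"
  by (metis of_nat_invertible qp_div_eq_mult_inverse of_nat_mult_nat_inverse)

definition in_ppow_Zp :: "nat \<Rightarrow> 'p::prime_card qp \<Rightarrow> bool" where
  "in_ppow_Zp M x \<longleftrightarrow> (\<exists>z\<in>Zp. x = of_nat (CARD('p) ^ M) * z)"

lemma padic_lim_iff: "padic_lim a L \<longleftrightarrow> (\<forall>M. \<exists>N0. \<forall>N\<ge>N0. in_ppow_Zp M (a N - L))"
  unfolding padic_lim_def in_ppow_Zp_def ..

lemma in_ppow_Zp_0: "in_ppow_Zp M 0"
  unfolding in_ppow_Zp_def using Zp_of_nat[of 0] by force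

lemma in_ppow_Zp_add: "in_ppow_Zp M x \<Longrightarrow> in_ppow_Zp M y \<Longrightarrow> in_ppow_Zp M (x + y)"
  unfolding in_ppow_Zp_def using Zp_add by (metis distrib_left)

lemma in_ppow_Zp_diff: "in_ppow_Zp M x \<Longrightarrow> in_ppow_Zp M y \<Longrightarrow> in_ppow_Zp M (x - y)"
  unfolding in_ppow_Zp_def using Zp_add Zp_uminus by (metis right_diff_distrib diff_conv_add_uminus)

lemma in_ppow_Zp_mono:
  fixes x :: "'p::prime_card qp"
  assumes "M \<le> M'" "in_ppow_Zp M' x"
  shows "in_ppow_Zp M x"
proof -
  obtain z where z: "z \<in> Zp" "x = of_nat (CARD('p) ^ M') * z"
    using assms(2) unfolding in_ppow_Zp_def by blast
  then have "x = of_nat (CARD('p) ^ M) * (of_nat (CARD('p) ^ (M' - M)) * z)"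
    using assms(1) by (simp add: mult.assoc[symmetric] power_add[symmetric])
  then show ?thesis
    unfolding in_ppow_Zp_def using Zp_mult[OF Zp_of_nat z(1)] by blast
qed

lemma in_ppow_Zp_mult:
  assumes "of_nat (CARD('p) ^ e) * c \<in> (Zp :: 'p::prime_card qp set)" "in_ppow_Zp (M + e) x"
  shows "in_ppow_Zp M (c * x)"
proof -
  obtain z where z: "z \<in> Zp" "x = of_nat (CARD('p) ^ (M + e)) * z"
    using assms(2) unfolding in_ppow_Zp_def by blast
  then have "c * x = of_nat (CARD('p) ^ M) * ((of_nat (CARD('p) ^ e) * c) * z)"
    by (simp add: power_add ac_simps)
  then show ?thesis
    unfolding in_ppow_Zp_def using Zp_mult[OF assms(1) z(1)] by blast
qed

lemma eq_0_if_in_all_ppow_Zp: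
  assumes "\<And>M. in_ppow_Zp M x"
  shows "x = (0 :: 'p::prime_card qp)"
proof -
  obtain e f where f: "compat CARD('p) f" "x = (qp_frac e f :: 'p qp)"
    using qp_frac_cases by blast
  have "[f N = 0] (mod (int CARD('p) ^ N))" for N
  proof -
    obtain g where g: "compat CARD('p) g" "x = of_nat (CARD('p) ^ N) * qp_frac 0 g"
      using assms[of N] by (auto simp: in_ppow_Zp_def Zp_iff)
    then have "x = qp_frac 0 (\<lambda>K. int CARD('p) ^ N * g K)"
      by (simp add: of_nat_qp_frac qp_frac_mult compat_const)
    then have "[f N = int CARD('p) ^ e * (int CARD('p) ^ N * g N)] (mod (int CARD('p) ^ N))"
      using f g by (simp add: qp_frac_eq_iff compat_intros)
    then show ?thesis
      by (simp add: cong_0_iff cong_dvd_iff)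
  qed
  then show ?thesis
    using f by (simp add: zero_qp_frac qp_frac_eq_iff compat_const)
qed

lemma padic_lim_unique:
  assumes "padic_lim a L" "padic_lim a K"
  shows "L = K"
proof -
  have "in_ppow_Zp M (K - L)" for M
  proof -
    obtain N1 where "\<forall>N\<ge>N1. in_ppow_Zp M (a N - L)"
      using assms(1) unfolding padic_lim_iff by blast
    moreover obtain N2 where "\<forall>N\<ge>N2. in_ppow_Zp M (a N - K)"
      using assms(2) unfolding padic_lim_iff by blast
    ultimately show ?thesis
      using in_ppow_Zp_diff[of M "a (max N1 N2) - L" "a (max N1 N2) - K"] by simp
  qed
  then show ?thesis
    using eq_0_if_in_all_ppow_Zp[of "K - L"] by simp
qed

lemma padic_lim_const: "padic_lim (\<lambda>_. c) c"
  unfolding padic_lim_iff by (simp add: in_ppow_Zp_0)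

lemma padic_lim_add:
  assumes "padic_lim a L" "padic_lim b K"
  shows "padic_lim (\<lambda>N. a N + b N) (L + K)"
  unfolding padic_lim_iff
proof
  fix M
  obtain N1 where N1: "\<forall>N\<ge>N1. in_ppow_Zp M (a N - L)"
    using assms(1) unfolding padic_lim_iff by blast
  obtain N2 where N2: "\<forall>N\<ge>N2. in_ppow_Zp M (b N - K)"
    using assms(2) unfolding padic_lim_iff by blast
  have "in_ppow_Zp M (a N + b N - (L + K))" if "N \<ge> max N1 N2" for N
    using in_ppow_Zp_add[of M "a N - L" "b N - K"] N1 N2 that by (simp add: algebra_simps)
  then show "\<exists>N0. \<forall>N\<ge>N0. in_ppow_Zp M (a N + b N - (L + K))"
    by blast
qed

lemma padic_lim_sum:
  "finite S \<Longrightarrow> (\<And>j. j \<in> S \<Longrightarrow> padic_lim (a j) (L j)) \<Longrightarrow>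
    padic_lim (\<lambda>N. \<Sum>j\<in>S. a j N) (\<Sum>j\<in>S. L j)"
  by (induction S rule: finite_induct) (auto intro: padic_lim_add simp: padic_lim_const)

lemma padic_lim_cmult:
  fixes L :: "'p::prime_card qp"
  assumes "padic_lim a L"
  shows "padic_lim (\<lambda>N. c * a N) (c * L)"
  unfolding padic_lim_iff
proof
  fix M
  obtain e where e: "of_nat (CARD('p) ^ e) * c \<in> Zp"
    using Zp_scaled by blast
  obtain N1 where "\<forall>N\<ge>N1. in_ppow_Zp (M + e) (a N - L)"
    using assms unfolding padic_lim_iff by blast
  then have "\<forall>N\<ge>N1. in_ppow_Zp M (c * a N - c * L)"
    using in_ppow_Zp_mult[OF e] by (metis right_diff_distrib)
  then show "\<exists>N0. \<forall>N\<ge>N0. in_ppow_Zp M (c * a N - c * L)"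
    by blast
qed

lemma padic_limI_ppow:
  assumes "\<And>N. \<exists>w\<in>Zp. a N - L = c * (of_nat (CARD('p) ^ N) * w)"
  shows "padic_lim a (L :: 'p::prime_card qp)"
  unfolding padic_lim_iff
proof
  fix M
  obtain e where e: "of_nat (CARD('p) ^ e) * c \<in> (Zp :: 'p qp set)"
    using Zp_scaled by blast
  have "in_ppow_Zp M (a N - L)" if "N \<ge> M + e" for N
  proof -
    obtain w where w: "w \<in> Zp" "a N - L = c * (of_nat (CARD('p) ^ N) * w)"
      using assms by blast
    then have "in_ppow_Zp (M + e) (of_nat (CARD('p) ^ N) * w)"
      using that in_ppow_Zp_mono unfolding in_ppow_Zp_def by blast
    then show ?thesis
      using in_ppow_Zp_mult[OF e] w(2) by simp
  qed
  then show "\<exists>N0. \<forall>N\<ge>N0. in_ppow_Zp M (a N - L)"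
    by blast
qed

section \<open>The Volkenborn integral of polynomials\<close>

definition has_volkenborn :: "(nat \<Rightarrow> 'p::prime_card qp) \<Rightarrow> 'p qp \<Rightarrow> bool" where
  "has_volkenborn f L \<longleftrightarrow>
     padic_lim (\<lambda>N. qp_div (\<Sum>x<CARD('p) ^ N. f x) (of_nat (CARD('p) ^ N))) L"

lemma volkenborn_eqI: "has_volkenborn f L \<Longrightarrow> volkenborn f = L"
  unfolding has_volkenborn_def volkenborn_def using padic_lim_unique by blast

lemma has_volkenborn_iff:
  "has_volkenborn f L \<longleftrightarrow>
     padic_lim (\<lambda>N. (\<Sum>x<CARD('p) ^ N. f x) * nat_inverse (CARD('p) ^ N)) (L :: 'p::prime_card qp)"
  unfolding has_volkenborn_def by (simp add: qp_div_of_nat del: of_nat_power)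

lemma has_volkenborn_cmult:
  assumes "has_volkenborn f L"
  shows "has_volkenborn (\<lambda>x. c * f x) (c * L)"
  using padic_lim_cmult[OF assms[unfolded has_volkenborn_iff], of c]
  unfolding has_volkenborn_iff by (simp add: sum_distrib_left ac_simps)

lemma has_volkenborn_sum:
  fixes f :: "'j \<Rightarrow> nat \<Rightarrow> 'p::prime_card qp"
  assumes "finite S" "\<And>j. j \<in> S \<Longrightarrow> has_volkenborn (f j) (L j)"
  shows "has_volkenborn (\<lambda>x. \<Sum>j\<in>S. f j x) (\<Sum>j\<in>S. L j)"
proof -
  have "(\<Sum>x<n. \<Sum>j\<in>S. f j x) * i = (\<Sum>j\<in>S. (\<Sum>x<n. f j x) * i)" for n i
    by (simp add: sum_distrib_right) (rule sum.swap)
  then show ?thesis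
    using padic_lim_sum[OF assms(1), of "\<lambda>j N. (\<Sum>x<CARD('p) ^ N. f j x) * nat_inverse (CARD('p) ^ N)" L]
      assms(2) unfolding has_volkenborn_iff by simp
qed

definition ffact :: "nat \<Rightarrow> 'a::comm_ring_1 \<Rightarrow> 'a" where
  "ffact l x = (\<Prod>j<l. x - of_nat j)"

lemma ffact_0 [simp]: "ffact 0 x = 1"
  by (simp add: ffact_def)

lemma ffact_Suc: "ffact (Suc l) x = ffact l x * (x - of_nat l)"
  by (simp add: ffact_def)

lemma ffact_Suc_shift: "ffact (Suc l) x = x * ffact l (x - 1)"
  unfolding ffact_def by (subst prod.lessThan_Suc_shift) (simp add: algebra_simps)

lemma of_int_ffact: "of_int (ffact l x) = ffact l (of_int x)"
  by (simp add: ffact_def)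

lemma ffact_minus_one: "ffact l (- 1) = (- 1) ^ l * fact l"
  by (induction l) (simp_all add: ffact_Suc algebra_simps)

lemma ffact_cong: "[ffact l (x + a) = ffact l a] (mod x)" for x a :: int
  unfolding ffact_def by (rule cong_prod) (simp add: cong_iff_dvd_diff)

lemma sum_ffact:
  "of_nat (Suc l) * (\<Sum>x<n. ffact l (of_nat x)) = (ffact (Suc l) (of_nat n) :: 'a::comm_ring_1)"
proof (induction n)
  case 0
  then show ?case by (simp add: ffact_Suc_shift)
next
  case (Suc n)
  have "of_nat (Suc l) * (\<Sum>x<Suc n. ffact l (of_nat x)) =
      ffact l (of_nat n) * (of_nat n - of_nat l) + of_nat (Suc l) * (ffact l (of_nat n) :: 'a)"
    using Suc by (simp add: ffact_Suc algebra_simps)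
  also have "\<dots> = (of_nat n + 1) * ffact l (of_nat n)"
    by (simp add: algebra_simps)
  also have "\<dots> = ffact (Suc l) (of_nat (Suc n))"
    by (simp add: ffact_Suc_shift add.commute)
  finally show ?case .
qed

lemma power_eq_sum_Stirling_ffact: "x ^ m = (\<Sum>l\<le>m. of_nat (Stirling m l) * ffact l x)"
proof (induction m)
  case 0
  then show ?case by simp
next
  case (Suc m)
  have "(\<Sum>l\<le>m. of_nat (Stirling m l * l) * ffact l x) =
      (\<Sum>l<m. of_nat (Stirling m (Suc l) * Suc l) * ffact (Suc l) x)"
    by (simp only: lessThan_Suc_atMost[symmetric] sum.lessThan_Suc_shift) simp
  also have "\<dots> = (\<Sum>l\<le>m. of_nat (Suc l * Stirling m (Suc l)) * ffact (Suc l) x)"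
    by (simp add: lessThan_Suc_atMost[symmetric] mult.commute)
  finally have shift: "(\<Sum>l\<le>m. of_nat (Stirling m l * l) * ffact l x) =
      (\<Sum>l\<le>m. of_nat (Suc l * Stirling m (Suc l)) * ffact (Suc l) x)" .
  have "x ^ Suc m = (\<Sum>l\<le>m. of_nat (Stirling m l) * (x * ffact l x))"
    using Suc by (simp add: sum_distrib_left ac_simps)
  also have "\<dots> = (\<Sum>l\<le>m. of_nat (Stirling m l) * ffact (Suc l) x) +
      (\<Sum>l\<le>m. of_nat (Stirling m l * l) * ffact l x)"
    by (simp add: ffact_Suc sum.distrib[symmetric] algebra_simps)
  also have "\<dots> = (\<Sum>l\<le>m. of_nat (Stirling (Suc m) (Suc l)) * ffact (Suc l) x)"
    unfolding shift by (simp add: sum.distrib[symmetric] algebra_simps)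
  also have "\<dots> = (\<Sum>l\<le>Suc m. of_nat (Stirling (Suc m) l) * ffact l x)"
    by (subst sum.atMost_Suc_shift) simp
  finally show ?case .
qed

lemma has_volkenborn_ffact:
  "has_volkenborn (\<lambda>x. ffact l (of_nat x))
     (qp_div ((- 1) ^ l * of_nat (fact l)) (of_nat (Suc l)) :: 'p::prime_card qp)"
  unfolding has_volkenborn_iff qp_div_of_nat[OF zero_less_Suc]
proof (rule padic_limI_ppow)
  fix N
  define n where "n = CARD('p) ^ N"
  define c :: "'p qp" where "c = (- 1) ^ l * of_nat (fact l)"
  define S :: "'p qp" where "S = (\<Sum>x<n. ffact l (of_nat x))"
  define inv_l :: "'p qp" where "inv_l = nat_inverse (Suc l)"
  define inv_n :: "'p qp" where "inv_n = nat_inverse n"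
  obtain w where w: "ffact l (int n - 1) = (- 1) ^ l * int (fact l) + int n * w"
    using ffact_cong[of l "int n" "- 1"] ffact_minus_one[where 'a=int]
    by (metis cong_iff_lin cong_sym diff_conv_add_uminus of_nat_fact)
  have "of_nat (Suc l) * S = of_nat n * ffact l (of_nat n - 1 :: 'p qp)"
    unfolding S_def by (simp only: sum_ffact ffact_Suc_shift)
  also have "ffact l (of_nat n - 1 :: 'p qp) = of_int (ffact l (int n - 1))"
    by (simp add: of_int_ffact)
  also have "\<dots> = c + of_nat n * of_int w"
    by (simp add: w c_def del: of_nat_fact)
  finally have S_eq: "of_nat (Suc l) * S = of_nat n * (c + of_nat n * of_int w)" .
  have "n > 0"
    by (simp add: n_def)
  then have inv: "of_nat (Suc l) * inv_l = 1" "of_nat n * inv_n = 1"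
    unfolding inv_l_def inv_n_def by (simp_all only: of_nat_mult_nat_inverse zero_less_Suc)
  have "S * inv_n = (of_nat (Suc l) * inv_l) * S * inv_n"
    by (simp only: inv mult_1_left)
  also have "\<dots> = inv_l * (of_nat (Suc l) * S) * inv_n"
    by (simp only: ac_simps)
  also have "\<dots> = inv_l * (c + of_nat n * of_int w) * (of_nat n * inv_n)"
    unfolding S_eq by (simp only: ac_simps)
  also have "\<dots> = inv_l * (c + of_nat n * of_int w)"
    by (simp only: inv mult_1_right)
  finally have "S * inv_n - c * inv_l = inv_l * (of_nat n * of_int w)"
    by (simp add: algebra_simps)
  then show "\<exists>w\<in>Zp. (\<Sum>x<CARD('p) ^ N. ffact l (of_nat x)) * nat_inverse (CARD('p) ^ N) -
      (- 1) ^ l * of_nat (fact l) * nat_inverse (Suc l) = inv_l * (of_nat (CARD('p) ^ N) * w)"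
    using Zp_of_int unfolding n_def c_def S_def inv_l_def inv_n_def by blast
qed

text \<open>This is the Bernoulli number \<open>B\<^sub>m\<close> (with \<open>B\<^sub>1 = -1/2\<close>), written as in the theorem.\<close>
definition bernoulli_qp :: "nat \<Rightarrow> 'p::prime_card qp" where
  "bernoulli_qp m = (\<Sum>l=0..m.
     qp_div ((- 1) ^ l * of_nat (fact l) * of_nat (Stirling m l)) (of_nat (l + 1)))"

lemma has_volkenborn_power: "has_volkenborn (\<lambda>x. of_nat x ^ m) (bernoulli_qp m :: 'p::prime_card qp)"
proof -
  have "has_volkenborn (\<lambda>x. \<Sum>l\<le>m. of_nat (Stirling m l) * ffact l (of_nat x))
      (\<Sum>l\<le>m. of_nat (Stirling m l) * qp_div ((- 1) ^ l * of_nat (fact l)) (of_nat (Suc l)) :: 'p qp)"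
    by (rule has_volkenborn_sum, simp, rule has_volkenborn_cmult, rule has_volkenborn_ffact)
  moreover have "(\<Sum>l\<le>m. of_nat (Stirling m l) * qp_div ((- 1) ^ l * of_nat (fact l)) (of_nat (Suc l)))
      = (bernoulli_qp m :: 'p qp)"
    unfolding bernoulli_qp_def atLeast0AtMost
    by (intro sum.cong) (simp_all add: qp_div_of_nat[of "Suc _"] ac_simps del: of_nat_Suc)
  ultimately show ?thesis
    by (simp flip: power_eq_sum_Stirling_ffact)
qed

lemma mvolkenborn_poly_prod_list:
  assumes "finite S"
  shows "mvolkenborn k (\<lambda>xs. \<Sum>m\<in>S. c m * of_nat (prod_list xs) ^ m) =
    (\<Sum>m\<in>S. c m * bernoulli_qp m ^ k :: 'p::prime_card qp)"
proof (induction k arbitrary: c)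
  case 0
  then show ?case by simp
next
  case (Suc k)
  have "mvolkenborn (Suc k) (\<lambda>xs. \<Sum>m\<in>S. c m * of_nat (prod_list xs) ^ m) =
      volkenborn (\<lambda>x. \<Sum>m\<in>S. (c m * bernoulli_qp m ^ k) * (of_nat x :: 'p qp) ^ m)"
    using Suc.IH[of "\<lambda>m. c m * of_nat _ ^ m"] by (simp add: power_mult_distrib ac_simps)
  also have "\<dots> = (\<Sum>m\<in>S. (c m * bernoulli_qp m ^ k) * bernoulli_qp m)"
    by (rule volkenborn_eqI, rule has_volkenborn_sum[OF assms],
        rule has_volkenborn_cmult, rule has_volkenborn_power)
  finally show ?case
    by (simp add: ac_simps)
qed

lemma sum_PiE_prod_eq_power_sum:
  fixes f :: "'b \<Rightarrow> 'c::comm_semiring_1"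
  assumes "finite A" "finite B"
  shows "(\<Sum>l\<in>A \<rightarrow>\<^sub>E B. \<Prod>i\<in>A. f (l i)) = (\<Sum>j\<in>B. f j) ^ card A"
  using prod_sum_PiE[of A "\<lambda>_. B" "\<lambda>_. f"] assms by simp

lemma prod_linear_powers_eq_sum_comtet1:
  fixes \<alpha> :: "nat \<Rightarrow> 'a::comm_ring_1"
  shows "(\<Prod>i<n. (y - \<alpha> i) ^ r i) = (\<Sum>m=0..(\<Sum>i<n. r i). comtet1 \<alpha> n r m * y ^ m)"
proof -
  define Q where "Q = (\<Prod>i<n. [:- \<alpha> i, 1:] ^ r i)"
  have "degree Q \<le> (\<Sum>i<n. r i)"
    unfolding Q_def using degree_prod_sum_le[of "{..<n}" "\<lambda>i. [:- \<alpha> i, 1:] ^ r i"]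
    by (simp add: o_def degree_linear_power)
  then have "poly Q y = poly (\<Sum>m\<le>(\<Sum>i<n. r i). monom (coeff Q m) m) y"
    by (simp add: poly_as_sum_of_monoms')
  then show ?thesis
    by (simp add: Q_def poly_prod poly_sum poly_monom comtet1_def atLeast0AtMost)
qed

theorem theorem2p2:
  fixes \<alpha> :: "nat \<Rightarrow> 'p::prime_card qp" and r :: "nat \<Rightarrow> nat" and k n :: nat
  assumes "k \<ge> 1"
    and "\<forall>i<n. \<alpha> i \<in> Zp"
  shows "mvolkenborn k (\<lambda>xs. \<Prod>i<n. (of_nat (prod_list xs) - \<alpha> i) ^ r i)
    = (\<Sum>m=0..(\<Sum>i<n. r i). comtet1 \<alpha> n r m *
         (\<Sum>l\<in>{1..k} \<rightarrow>\<^sub>E {0..m}. \<Prod>i=1..k.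
            qp_div ((-1) ^ l i * of_nat (fact (l i)) * of_nat (Stirling m (l i)))
                   (of_nat (l i + 1))))"
proof -
  have power: "(\<Sum>l\<in>{1..k} \<rightarrow>\<^sub>E {0..m}. \<Prod>i=1..k.
      qp_div ((-1) ^ l i * of_nat (fact (l i)) * of_nat (Stirling m (l i))) (of_nat (l i + 1))) =
    (bernoulli_qp m :: 'p qp) ^ k" for m
    using sum_PiE_prod_eq_power_sum[of "{1..k}" "{0..m}"
        "\<lambda>j. qp_div ((-1) ^ j * of_nat (fact j) * of_nat (Stirling m j)) (of_nat (j + 1))"]
    unfolding bernoulli_qp_def by simp
  have "mvolkenborn k (\<lambda>xs. \<Prod>i<n. (of_nat (prod_list xs) - \<alpha> i) ^ r i) =
      mvolkenborn k (\<lambda>xs. \<Sum>m=0..(\<Sum>i<n. r i). comtet1 \<alpha> n r m * of_nat (prod_list xs) ^ m)"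
    by (simp only: prod_linear_powers_eq_sum_comtet1)
  also have "\<dots> = (\<Sum>m=0..(\<Sum>i<n. r i). comtet1 \<alpha> n r m * bernoulli_qp m ^ k)"
    by (rule mvolkenborn_poly_prod_list) simp
  finally show ?thesis
    by (simp only: power)
qed

end
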